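(* Let $(A,d)$ be a $\mathbb{Z}/2$-graded $\Lambda$-algebra (not necessarily associative or commutative) with a differential $d$ satisfying the graded Leibniz rule, equipped with a map $\operatorname{val}:A\to\mathbb{R}\cup\{+\infty\}$ such that $\operatorname{val}^{-1}(+\infty)=\{0\}$ and for all $c\in\Lambda$, $x,y\in A$: $\operatorname{val}(x\cdot y)\ge\operatorname{val}(x)+\operatorname{val}(y)$, $\operatorname{val}(dx)\ge\operatorname{val}(x)$, $\operatorname{val}(cx)=\operatorname{val}(c)+\operatorname{val}(x)$, $\operatorname{val}(x+y)\ge\min\{\operatorname{val}(x),\operatorname{val}(y)\}$; assume $A$ is complete with respect to the non-Archimedean norm $e^{-\operatorname{val}}$. Let $a$ be a nonzero idempotent in the cohomology $H(A)$ (with its induced product). Then every closed element of degree $0$ of $A$ representing $a$ has non-positive valuation.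
   Context: $\Lambda$ is the Novikov field of series $\sum_{i\ge0}a_iT^{\lambda_i}$, $a_i\in\mathbb{Q}$, $\lambda_i\in\mathbb{R}$ strictly increasing to $+\infty$, with valuation $\operatorname{val}$ (smallest exponent with nonzero coefficient). *)

theory Defs
  imports "HOL-Library.Extended_Real"
begin

text \<open>An element \<Sum> a_i T^(lambda_i) (a_i rational, lambda_i strictly increasing to +infinity,
  finitely or infinitely many terms) is represented by its coefficient function
  real \<Rightarrow> rat; the condition is that below every bound only finitely many
  exponents carry a nonzero coefficient.\<close>

definition novikov :: "(real \<Rightarrow> rat) set" where
  "novikov = {f. \<forall>C::real. finite {r. f r \<noteq> 0 \<and> r \<le> C}}"

definition nov_zero :: "real \<Rightarrow> rat" where
  "nov_zero = (\<lambda>r. 0)"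

definition nov_one :: "real \<Rightarrow> rat" where
  "nov_one = (\<lambda>r. if r = 0 then 1 else 0)"

definition nov_add :: "(real \<Rightarrow> rat) \<Rightarrow> (real \<Rightarrow> rat) \<Rightarrow> (real \<Rightarrow> rat)" where
  "nov_add f g = (\<lambda>r. f r + g r)"

definition nov_mult :: "(real \<Rightarrow> rat) \<Rightarrow> (real \<Rightarrow> rat) \<Rightarrow> (real \<Rightarrow> rat)" where
  "nov_mult f g = (\<lambda>r. \<Sum>s\<in>{s. f s \<noteq> 0 \<and> g (r - s) \<noteq> 0}. f s * g (r - s))"

definition nov_val :: "(real \<Rightarrow> rat) \<Rightarrow> ereal" where
  "nov_val f = (if f = nov_zero then \<infinity> else ereal (Inf {r. f r \<noteq> 0}))"

text \<open>A0, A1: even and odd parts; sm: scalar multiplication by \<Lambda>;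
  mu: (not necessarily associative/commutative) bilinear product; d: differential;
  v: valuation with values in R \<union> {+\<infinity>}.\<close>

locale valued_dga =
  fixes A0 A1 :: "'a::ab_group_add set"
    and sm :: "(real \<Rightarrow> rat) \<Rightarrow> 'a \<Rightarrow> 'a"
    and mu :: "'a \<Rightarrow> 'a \<Rightarrow> 'a"
    and d :: "'a \<Rightarrow> 'a"
    and v :: "'a \<Rightarrow> ereal"
  assumes
    sm_add_right: "c \<in> novikov \<Longrightarrow> sm c (x + y) = sm c x + sm c y"
    and sm_add_left: "c \<in> novikov \<Longrightarrow> c' \<in> novikov \<Longrightarrow> sm (nov_add c c') x = sm c x + sm c' x"
    and sm_mult: "c \<in> novikov \<Longrightarrow> c' \<in> novikov \<Longrightarrow> sm (nov_mult c c') x = sm c (sm c' x)"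
    and sm_one: "sm nov_one x = x"
    and mu_add_left: "mu (x + y) z = mu x z + mu y z"
    and mu_add_right: "mu x (y + z) = mu x y + mu x z"
    and mu_sm_left: "c \<in> novikov \<Longrightarrow> mu (sm c x) y = sm c (mu x y)"
    and mu_sm_right: "c \<in> novikov \<Longrightarrow> mu x (sm c y) = sm c (mu x y)"
    and A0_zero: "0 \<in> A0" and A1_zero: "0 \<in> A1"
    and A0_add: "x \<in> A0 \<Longrightarrow> y \<in> A0 \<Longrightarrow> x + y \<in> A0"
    and A1_add: "x \<in> A1 \<Longrightarrow> y \<in> A1 \<Longrightarrow> x + y \<in> A1"
    and A0_sm: "c \<in> novikov \<Longrightarrow> x \<in> A0 \<Longrightarrow> sm c x \<in> A0"
    and A1_sm: "c \<in> novikov \<Longrightarrow> x \<in> A1 \<Longrightarrow> sm c x \<in> A1"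
    and direct_sum: "\<And>x. \<exists>!p. p \<in> A0 \<times> A1 \<and> x = fst p + snd p"
    and mu_00: "x \<in> A0 \<Longrightarrow> y \<in> A0 \<Longrightarrow> mu x y \<in> A0"
    and mu_01: "x \<in> A0 \<Longrightarrow> y \<in> A1 \<Longrightarrow> mu x y \<in> A1"
    and mu_10: "x \<in> A1 \<Longrightarrow> y \<in> A0 \<Longrightarrow> mu x y \<in> A1"
    and mu_11: "x \<in> A1 \<Longrightarrow> y \<in> A1 \<Longrightarrow> mu x y \<in> A0"
    and d_add: "d (x + y) = d x + d y"
    and d_sm: "c \<in> novikov \<Longrightarrow> d (sm c x) = sm c (d x)"
    and d_d: "d (d x) = 0"
    and d_A0: "x \<in> A0 \<Longrightarrow> d x \<in> A1"
    and d_A1: "x \<in> A1 \<Longrightarrow> d x \<in> A0"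
    and leibniz_even: "x \<in> A0 \<Longrightarrow> d (mu x y) = mu (d x) y + mu x (d y)"
    and leibniz_odd: "x \<in> A1 \<Longrightarrow> d (mu x y) = mu (d x) y - mu x (d y)"
    and v_not_minf: "v x \<noteq> -\<infinity>"
    and v_inf_iff: "v x = \<infinity> \<longleftrightarrow> x = 0"
    and v_mu: "v (mu x y) \<ge> v x + v y"
    and v_d: "v (d x) \<ge> v x"
    and v_sm: "c \<in> novikov \<Longrightarrow> v (sm c x) = nov_val c + v x"
    and v_add: "v (x + y) \<ge> min (v x) (v y)"
    \<comment> \<open>completeness w.r.t. the norm exp(-v): every Cauchy sequence converges\<close>
    and complete: "\<And>s :: nat \<Rightarrow> 'a.
        (\<forall>M::real. \<exists>N. \<forall>m\<ge>N. \<forall>n\<ge>N. v (s m - s n) \<ge> ereal M) \<Longrightarrow>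
        \<exists>L. \<forall>M::real. \<exists>N. \<forall>n\<ge>N. v (s n - L) \<ge> ereal M"

end

theory Submission
  imports Defs "HOL-Analysis.Extended_Real_Limits"
begin

text \<open>Suppose the idempotent class is represented by a closed even x with v x = l > 0, say
  x * x - x = d y. The iterated squares z_0 = x, z_(n+1) = z_n * z_n all represent the same
  class, and z_(n+1) - z_n = d u_n for primitives u_n built recursively from y. Since v z_n grows
  at least like (n + 1) l and v u_n like v y + n l, completeness gives a sum L of the series
  \<Sum> u_n, and x + d L is the limit of z_N + d (L - \<Sum>(n < N) u_n), which is 0.
  So x = d (- L) would be exact.\<close>

definition nov_const :: "rat \<Rightarrow> real \<Rightarrow> rat" where
  "nov_const q = (\<lambda>r. if r = 0 then q else 0)"

lemma novikov_nov_const: "nov_const q \<in> novikov"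
proof -
  have "{r. nov_const q r \<noteq> 0 \<and> r \<le> C} \<subseteq> {0}" for C
    unfolding nov_const_def by auto
  then show ?thesis
    unfolding novikov_def by (auto intro: finite_subset)
qed

lemma nov_zero_eq_const: "nov_zero = nov_const 0"
  unfolding nov_zero_def nov_const_def by simp

lemma nov_one_eq_const: "nov_one = nov_const 1"
  unfolding nov_one_def nov_const_def ..

lemma nov_add_const: "nov_add (nov_const p) (nov_const q) = nov_const (p + q)"
  unfolding nov_add_def nov_const_def by auto

lemma nov_val_const:
  assumes "q \<noteq> 0"
  shows "nov_val (nov_const q) = 0"
proof -
  have "nov_const q \<noteq> nov_zero"
    using assms by (metis nov_const_def nov_zero_def)
  moreover have "{r. nov_const q r \<noteq> 0} = {0}"
    using assms unfolding nov_const_def by auto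
  ultimately show ?thesis
    unfolding nov_val_def by (simp add: zero_ereal_def)
qed

lemma tendsto_PInfty_if_linear_lower_bound:
  assumes "b \<noteq> -\<infinity>" and "0 < l" and bound: "\<And>n. b + ereal (real n * l) \<le> f n"
  shows "f \<longlonglongrightarrow> \<infinity>"
proof -
  have "LIM n sequentially. l * real n :> at_top"
    using filterlim_tendsto_pos_mult_at_top[OF tendsto_const assms(2) filterlim_real_sequentially] .
  then have "(\<lambda>n. ereal (real n * l)) \<longlonglongrightarrow> \<infinity>"
    by (simp add: tendsto_PInfty_eq_at_top mult.commute)
  from tendsto_add_ereal_PInf[OF assms(1) this tendsto_const]
  have "(\<lambda>n. b + ereal (real n * l)) \<longlonglongrightarrow> \<infinity>"
    by (simp add: add.commute)
  then show ?thesis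
    by (rule tendsto_sandwich[rotated 2, OF _ tendsto_const]) (simp_all add: bound)
qed

context valued_dga
begin

sublocale d: additive d
  by unfold_locales (rule d_add)

lemma mu_additive_left: "additive (\<lambda>x. mu x z)"
  by (rule additive.intro) (rule mu_add_left)

lemma mu_additive_right: "additive (mu z)"
  by (rule additive.intro) (rule mu_add_right)

lemma mu_zero_left: "mu 0 z = 0"
  by (rule additive.zero[OF mu_additive_left])

lemma mu_zero_right: "mu z 0 = 0"
  by (rule additive.zero[OF mu_additive_right])

lemma mu_diff_left: "mu (x - y) z = mu x z - mu y z"
  by (rule additive.diff[OF mu_additive_left])

lemma mu_diff_right: "mu z (x - y) = mu z x - mu z y"
  by (rule additive.diff[OF mu_additive_right])

lemma d_mu_closed_right:
  assumes "d z = 0"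
  shows "d (mu w z) = mu (d w) z"
proof -
  obtain p where "p \<in> A0 \<times> A1" and "w = fst p + snd p"
    using direct_sum[of w] by blast
  then obtain w0 w1 where w: "w0 \<in> A0" "w1 \<in> A1" "w = w0 + w1"
    by (cases p) auto
  have "d (mu w0 z) = mu (d w0) z" and "d (mu w1 z) = mu (d w1) z"
    using leibniz_even[OF w(1)] leibniz_odd[OF w(2)] assms mu_zero_right by simp_all
  then show ?thesis
    by (simp add: w(3) mu_add_left d.add)
qed

lemma d_mu_closed_even_left:
  assumes "x \<in> A0" and "d x = 0"
  shows "d (mu x w) = mu x (d w)"
  using leibniz_even[OF assms(1)] assms(2) mu_zero_left by simp

lemma v_zero: "v 0 = \<infinity>"
  using v_inf_iff by simp

lemma sm_nov_zero: "sm nov_zero x = 0"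
  using sm_add_left[of nov_zero nov_zero x]
  by (simp add: nov_zero_eq_const nov_add_const novikov_nov_const)

lemma sm_minus_one: "sm (nov_const (- 1)) x = - x"
proof -
  have "x + sm (nov_const (- 1)) x = 0"
    using sm_add_left[of "nov_const 1" "nov_const (- 1)" x] sm_one sm_nov_zero
    by (simp add: nov_one_eq_const nov_zero_eq_const nov_add_const novikov_nov_const)
  then show ?thesis
    by (simp add: add_eq_0_iff)
qed

lemma v_uminus: "v (- x) = v x"
  using v_sm[of "nov_const (- 1)" x] sm_minus_one
  by (simp add: novikov_nov_const nov_val_const)

lemma v_minus_commute: "v (x - y) = v (y - x)"
  using v_uminus[of "x - y"] by simp

lemma v_sum_ge:
  assumes "\<And>i. i \<in> I \<Longrightarrow> e \<le> v (f i)"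
  shows "e \<le> v (sum f I)"
  using assms
proof (induction I rule: infinite_finite_induct)
  case (insert i I)
  then have "e \<le> min (v (f i)) (v (sum f I))"
    by simp
  also have "\<dots> \<le> v (f i + sum f I)"
    by (rule v_add)
  finally show ?case
    using insert.hyps by simp
qed (simp_all add: v_zero)

lemma v_add_tendsto_PInfty:
  assumes "((\<lambda>n. v (f n)) \<longlongrightarrow> \<infinity>) F" and "((\<lambda>n. v (g n)) \<longlongrightarrow> \<infinity>) F"
  shows "((\<lambda>n. v (f n + g n)) \<longlongrightarrow> \<infinity>) F"
  unfolding tendsto_PInfty
proof
  fix r
  have "eventually (\<lambda>n. ereal r < v (f n) \<and> ereal r < v (g n)) F"
    using assms by (simp add: tendsto_PInfty eventually_conj)
  then show "eventually (\<lambda>n. ereal r < v (f n + g n)) F"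
  proof eventually_elim
    case (elim n)
    then have "ereal r < min (v (f n)) (v (g n))"
      by simp
    also have "\<dots> \<le> v (f n + g n)"
      by (rule v_add)
    finally show ?case .
  qed
qed

lemma v_d_tendsto_PInfty:
  assumes "((\<lambda>n. v (f n)) \<longlongrightarrow> \<infinity>) F"
  shows "((\<lambda>n. v (d (f n))) \<longlongrightarrow> \<infinity>) F"
  by (rule tendsto_sandwich[OF _ _ assms tendsto_const]) (simp_all add: v_d)

lemma series_converges:
  assumes "(\<lambda>n. v (u n)) \<longlonglongrightarrow> \<infinity>"
  shows "\<exists>L. (\<lambda>N. v ((\<Sum>n<N. u n) - L)) \<longlonglongrightarrow> \<infinity>"
proof -
  define S where "S N = (\<Sum>n<N. u n)" for N
  have "\<exists>N. \<forall>m\<ge>N. \<forall>n\<ge>N. ereal B \<le> v (S m - S n)" for B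
  proof -
    obtain N where N: "\<And>n. n \<ge> N \<Longrightarrow> ereal B \<le> v (u n)"
      using assms by (auto simp: Lim_PInfty)
    have "ereal B \<le> v (S m - S n)" if "N \<le> n" "n \<le> m" for m n
    proof -
      have "S m - S n = sum u {n..<m}"
        using sum_diff_nat_ivl[of 0 n m u] that by (simp add: S_def atLeast0LessThan)
      then show ?thesis
        using N that by (auto intro: v_sum_ge)
    qed
    then have "ereal B \<le> v (S m - S n)" if "N \<le> n" "N \<le> m" for m n
      using that v_minus_commute by (metis nle_le)
    then show ?thesis
      by blast
  qed
  then show ?thesis
    using complete[of S] by (simp add: S_def Lim_PInfty)
qed

lemma exact_if_cohomologous_to_null_sequence:
  assumes "z 0 = x" and step: "\<And>n. z (Suc n) - z n = d (u n)"
    and "(\<lambda>n. v (z n)) \<longlonglongrightarrow> \<infinity>" and "(\<lambda>n. v (u n)) \<longlonglongrightarrow> \<infinity>"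
  shows "\<exists>w. x = d w"
proof -
  obtain L where L: "(\<lambda>N. v ((\<Sum>n<N. u n) - L)) \<longlonglongrightarrow> \<infinity>"
    using series_converges assms(4) by blast
  have "x + d L = z N + d (L - (\<Sum>n<N. u n))" for N
    using sum_lessThan_telescope[of z N] step assms(1) by (simp add: d.sum d.diff)
  moreover have "(\<lambda>N. v (z N + d (L - (\<Sum>n<N. u n)))) \<longlonglongrightarrow> \<infinity>"
    using v_add_tendsto_PInfty[OF assms(3) v_d_tendsto_PInfty] L
    by (simp add: v_minus_commute[of L])
  ultimately have "v (x + d L) = \<infinity>"
    by (simp add: LIMSEQ_const_iff)
  then have "x = d (- L)"
    by (simp add: v_inf_iff d.minus eq_neg_iff_add_eq_0)
  then show ?thesis ..
qed

primrec square_iter :: "'a \<Rightarrow> nat \<Rightarrow> 'a" where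
  "square_iter x 0 = x"
| "square_iter x (Suc n) = mu (square_iter x n) (square_iter x n)"

text \<open>With z_n = square_iter x n, the recursion for the primitive u_n of z_(n+1) - z_n comes
  from z_(n+2) - z_(n+1) = (z_(n+1) - z_n) z_(n+1) + z_n (z_(n+1) - z_n).\<close>

primrec square_iter_primitive :: "'a \<Rightarrow> 'a \<Rightarrow> nat \<Rightarrow> 'a" where
  "square_iter_primitive x y 0 = y"
| "square_iter_primitive x y (Suc n) =
     mu (square_iter_primitive x y n) (square_iter x (Suc n))
     + mu (square_iter x n) (square_iter_primitive x y n)"

lemma square_iter_even: "x \<in> A0 \<Longrightarrow> square_iter x n \<in> A0"
  by (induction n) (simp_all add: mu_00)

lemma d_square_iter:
  assumes "x \<in> A0" and "d x = 0"
  shows "d (square_iter x n) = 0"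
  using assms by (induction n) (simp_all add: d_mu_closed_right mu_zero_left)

lemma v_square_iter_ge:
  assumes "0 \<le> l" and "ereal l \<le> v x"
  shows "ereal (real (Suc n) * l) \<le> v (square_iter x n)"
proof (induction n)
  case 0
  then show ?case
    using assms(2) by simp
next
  case (Suc n)
  have "ereal (real (Suc (Suc n)) * l) \<le> ereal (real (Suc n) * l) + ereal (real (Suc n) * l)"
    using assms(1) by (simp add: algebra_simps)
  also have "\<dots> \<le> v (square_iter x n) + v (square_iter x n)"
    using Suc by (intro add_mono)
  also have "\<dots> \<le> v (square_iter x (Suc n))"
    using v_mu by simp
  finally show ?case .
qed

lemma square_iter_step_eq_d:
  assumes "x \<in> A0" and "d x = 0" and "mu x x - x = d y"
  shows "square_iter x (Suc n) - square_iter x n = d (square_iter_primitive x y n)"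
proof (induction n)
  case 0
  then show ?case
    using assms(3) by simp
next
  case (Suc n)
  let ?z = "square_iter x" and ?u = "square_iter_primitive x y"
  have "?z (Suc (Suc n)) - ?z (Suc n)
      = mu (?z (Suc n) - ?z n) (?z (Suc n)) + mu (?z n) (?z (Suc n) - ?z n)"
    by (simp add: mu_diff_left mu_diff_right)
  also have "\<dots> = mu (d (?u n)) (?z (Suc n)) + mu (?z n) (d (?u n))"
    by (simp only: Suc)
  also have "\<dots> = d (?u (Suc n))"
    using assms(1,2)
    by (simp add: d.add d_mu_closed_right d_mu_closed_even_left d_square_iter square_iter_even
        del: square_iter.simps)
  finally show ?case .
qed

lemma v_square_iter_primitive_ge:
  assumes "0 \<le> l" and "ereal l \<le> v x"
  shows "v y + ereal (real n * l) \<le> v (square_iter_primitive x y n)"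
proof (induction n)
  case 0
  then show ?case
    by simp
next
  case (Suc n)
  let ?z = "square_iter x" and ?u = "square_iter_primitive x y"
  have z_ge: "ereal l \<le> v (?z m)" for m
  proof -
    have "ereal l \<le> ereal (real (Suc m) * l)"
      using assms(1) by (simp add: mult_le_cancel_right1)
    then show ?thesis
      using v_square_iter_ge[OF assms, of m] by (rule order_trans)
  qed
  have "ereal (real (Suc n) * l) = ereal (real n * l) + ereal l"
    by (simp add: algebra_simps)
  then have "v y + ereal (real (Suc n) * l) = (v y + ereal (real n * l)) + ereal l"
    by (simp add: add.assoc)
  also have "\<dots> \<le> min (v (?u n) + v (?z (Suc n))) (v (?z n) + v (?u n))"
    using add_mono[OF Suc z_ge[of "Suc n"]] add_mono[OF z_ge[of n] Suc]
    by (simp add: add.commute del: square_iter.simps)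
  also have "\<dots> \<le> min (v (mu (?u n) (?z (Suc n)))) (v (mu (?z n) (?u n)))"
    by (intro min.mono v_mu)
  also have "\<dots> \<le> v (?u (Suc n))"
    by (simp only: square_iter_primitive.simps v_add)
  finally show ?case .
qed

end

theorem lemma3p1:
  fixes A0 A1 :: "'a::ab_group_add set"
    and sm :: "(real \<Rightarrow> rat) \<Rightarrow> 'a \<Rightarrow> 'a"
    and mu :: "'a \<Rightarrow> 'a \<Rightarrow> 'a"
    and d :: "'a \<Rightarrow> 'a"
    and v :: "'a \<Rightarrow> ereal"
    and x :: 'a
  assumes "valued_dga A0 A1 sm mu d v"
    and "x \<in> A0"
    and "d x = 0"
    and "\<exists>y. mu x x - x = d y"
    and "\<not> (\<exists>y. x = d y)"
  shows "v x \<le> 0"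
proof (rule ccontr)
  interpret valued_dga A0 A1 sm mu d v by fact
  assume "\<not> v x \<le> 0"
  moreover have "v x \<noteq> \<infinity>"
    using assms(5) v_inf_iff d.zero by metis
  ultimately obtain l where l: "v x = ereal l" "0 < l"
    using v_not_minf[of x] by (cases "v x") auto
  obtain y where y: "mu x x - x = d y"
    using assms(4) by blast
  have "ereal l + ereal (real n * l) \<le> v (square_iter x n)" for n
    using v_square_iter_ge[of l x n] l by (simp add: algebra_simps)
  then have "(\<lambda>n. v (square_iter x n)) \<longlonglongrightarrow> \<infinity>"
    using l(2) by (intro tendsto_PInfty_if_linear_lower_bound[of "ereal l" l]) auto
  moreover have "(\<lambda>n. v (square_iter_primitive x y n)) \<longlonglongrightarrow> \<infinity>"
    using v_square_iter_primitive_ge[of l x y] l v_not_minf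
    by (intro tendsto_PInfty_if_linear_lower_bound[of "v y" l]) auto
  ultimately have "\<exists>w. x = d w"
    using exact_if_cohomologous_to_null_sequence square_iter_step_eq_d[OF assms(2,3) y]
    by (metis square_iter.simps(1))
  with assms(5) show False ..
qed

end
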